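(* For every integer $n\ge 2$, $$\operatorname{op}_{n,n-1}(123) = (n-1)\,\operatorname{op}_{[2,\underbrace{1,\dots,1}_{n-2}]}(123).$$
   Context: An ordered set partition of $[N]$ into $k$ blocks is a sequence $B_1/B_2/\cdots/B_k$ of nonempty, pairwise disjoint subsets of $[N]$ whose union is $[N]$; the order of the blocks matters, but not the order of elements within a block. For a permutation $\rho=\rho_1\cdots\rho_m\in\mathcal{S}_m$, an ordered partition $B_1/\cdots/B_k$ contains $\rho$ if there are block indices $i_1<i_2<\cdots<i_m$ and elements $b_j\in B_{i_j}$ such that $b_1\cdots b_m$ is order-isomorphic to $\rho$; otherwise it avoids $\rho$. $\operatorname{op}_{n,k}(\rho)$ is the number of $\rho$-avoiding ordered partitions of $[n]$ into $k$ blocks, and for positive integers $b_1,\dots,b_k$, $\operatorname{op}_{[b_1,\dots,b_k]}(\rho)$ is the number of $\rho$-avoiding ordered partitions $B_1/\cdots/B_k$ of $[b_1+\cdots+b_k]$ with $|B_i|=b_i$ for all $i$. *)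

theory Defs
  imports Main
begin

definition ordered_set_partition :: "nat \<Rightarrow> nat set list \<Rightarrow> bool" where
  "ordered_set_partition N bs \<longleftrightarrow>
     (\<forall>i < length bs. bs ! i \<noteq> {}) \<and>
     (\<forall>i < length bs. \<forall>j < length bs. i \<noteq> j \<longrightarrow> bs ! i \<inter> bs ! j = {}) \<and>
     (\<Union> (set bs)) = {1..N}"

definition op_contains :: "nat set list \<Rightarrow> nat list \<Rightarrow> bool" where
  "op_contains bs \<rho> \<longleftrightarrow>
     (\<exists>idx :: nat \<Rightarrow> nat. \<exists>b :: nat \<Rightarrow> nat.
        (\<forall>j < length \<rho>. idx j < length bs \<and> b j \<in> bs ! (idx j)) \<and>
        (\<forall>j < length \<rho>. \<forall>l < length \<rho>. j < l \<longrightarrow> idx j < idx l) \<and>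
        (\<forall>j < length \<rho>. \<forall>l < length \<rho>. b j < b l \<longleftrightarrow> \<rho> ! j < \<rho> ! l))"

definition op_avoids :: "nat set list \<Rightarrow> nat list \<Rightarrow> bool" where
  "op_avoids bs \<rho> \<longleftrightarrow> \<not> op_contains bs \<rho>"

definition op_nk :: "nat \<Rightarrow> nat \<Rightarrow> nat list \<Rightarrow> nat" where
  "op_nk n k \<rho> = card {bs. ordered_set_partition n bs \<and> length bs = k \<and> op_avoids bs \<rho>}"

definition op_sizes :: "nat list \<Rightarrow> nat list \<Rightarrow> nat" where
  "op_sizes bl \<rho> = card {bs. ordered_set_partition (sum_list bl) bs \<and> length bs = length bl \<and>
       (\<forall>i < length bl. card (bs ! i) = bl ! i) \<and> op_avoids bs \<rho>}"

end

theory Submission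
  imports Defs
begin

text \<open>A partition of [n] into n - 1 blocks has exactly one doubleton block, all others being
  singletons. Whether a 123 pattern can use two adjacent blocks depends only on their union and on
  which values lie below the first entry or above the second entry of some 12 pattern across them.
  The three elements of an adjacent doubleton/singleton pair can always be redistributed as
  singleton/doubleton without changing this information, and the rearrangement is invertible; so
  the 123-avoiders with the doubleton at position i are equinumerous with those having it at
  position i + 1. Hence all n - 1 positions contribute equally, and position 0 is exactly what
  op_[2,1,...,1](123) counts.\<close>

definition contains_123 :: "nat set list \<Rightarrow> bool" where
  "contains_123 bs \<longleftrightarrow> (\<exists>i j k x y z. i < j \<and> j < k \<and> k < length bs \<and>
     x \<in> bs ! i \<and> y \<in> bs ! j \<and> z \<in> bs ! k \<and> x < y \<and> y < z)"

lemma op_avoids_123_iff: "op_avoids bs [1, 2, 3] \<longleftrightarrow> \<not> contains_123 bs"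
proof -
  have "op_contains bs [1, 2, 3] \<longleftrightarrow> contains_123 bs"
  proof
    assume "op_contains bs [1, 2, 3]"
    then obtain idx b where
      "\<forall>j < length [1, 2, 3::nat]. idx j < length bs \<and> b j \<in> bs ! idx j"
      "\<forall>j < length [1, 2, 3::nat]. \<forall>l < length [1, 2, 3::nat]. j < l \<longrightarrow> idx j < idx l"
      "\<forall>j < length [1, 2, 3::nat]. \<forall>l < length [1, 2, 3::nat].
         b j < b l \<longleftrightarrow> [1, 2, 3::nat] ! j < [1, 2, 3] ! l"
      unfolding op_contains_def by blast
    then have "idx 0 < idx 1 \<and> idx 1 < idx 2 \<and> idx 2 < length bs \<and>
        b 0 \<in> bs ! idx 0 \<and> b 1 \<in> bs ! idx 1 \<and> b 2 \<in> bs ! idx 2 \<and> b 0 < b 1 \<and> b 1 < b 2"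
      by (simp add: All_less_Suc numeral_2_eq_2)
    then show "contains_123 bs"
      unfolding contains_123_def by blast
  next
    assume "contains_123 bs"
    then obtain i j k x y z where witness: "i < j" "j < k" "k < length bs"
      "x \<in> bs ! i" "y \<in> bs ! j" "z \<in> bs ! k" "x < y" "y < z"
      unfolding contains_123_def by blast
    show "op_contains bs [1, 2, 3]"
      unfolding op_contains_def
      by (rule exI[of _ "\<lambda>l. [i, j, k] ! l"], rule exI[of _ "\<lambda>l. [x, y, z] ! l"],
          use witness in \<open>simp add: All_less_Suc\<close>)
  qed
  then show ?thesis
    by (simp add: op_avoids_def)
qed

lemma sum_eq_Suc_card_obtain_two:
  fixes f :: "'a \<Rightarrow> nat"
  assumes "finite A" and pos: "\<And>x. x \<in> A \<Longrightarrow> f x \<ge> 1" and sum: "sum f A = Suc (card A)"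
  obtains a where "a \<in> A" "f a = 2" "\<And>x. x \<in> A \<Longrightarrow> x \<noteq> a \<Longrightarrow> f x = 1"
proof -
  have excess: "(\<Sum>x\<in>A. f x - 1) = 1"
    using sum_subtractf_nat[of A "\<lambda>_. 1" f] pos sum by simp
  then obtain a where a: "a \<in> A" "f a - 1 \<noteq> 0"
    by (metis sum.neutral zero_neq_one)
  have "(f a - 1) + (\<Sum>x\<in>A - {a}. f x - 1) = 1"
    using excess sum.remove[OF \<open>finite A\<close> a(1), of "\<lambda>x. f x - 1"] by linarith
  then have "f a - 1 = 1" and "(\<Sum>x\<in>A - {a}. f x - 1) = 0"
    using a(2) by linarith+
  then have "f a = 2" and "\<forall>x\<in>A - {a}. f x - 1 = 0"
    using \<open>finite A\<close> by simp_all
  then show ?thesis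
    using that a(1) pos by (metis Diff_iff diff_is_0_eq le_antisym singletonD)
qed

lemma card_2_obtain_less:
  fixes D :: "'a :: linorder set"
  assumes "card D = 2"
  obtains a b where "a < b" "D = {a, b}"
  using assms by (auto simp: card_2_iff) (metis insert_commute linorder_neqE)

lemma Union_set_conv_nth: "\<Union> (set xs) = (\<Union>k < length xs. xs ! k)"
  by (auto simp: set_conv_nth)

lemma ordered_set_partition_card_sum:
  assumes "ordered_set_partition n bs"
  shows "\<forall>k < length bs. finite (bs ! k) \<and> bs ! k \<noteq> {}"
    and "(\<Sum>k < length bs. card (bs ! k)) = n"
proof -
  have union: "(\<Union>k < length bs. bs ! k) = {1..n}"
    using assms unfolding ordered_set_partition_def Union_set_conv_nth by blast
  then show blocks: "\<forall>k < length bs. finite (bs ! k) \<and> bs ! k \<noteq> {}"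
    using assms unfolding ordered_set_partition_def
    by (metis UN_I finite_atLeastAtMost finite_subset lessThan_iff subsetI)
  have "card (\<Union>k < length bs. bs ! k) = (\<Sum>k < length bs. card (bs ! k))"
    using blocks assms by (intro card_UN_disjoint) (auto simp: ordered_set_partition_def)
  then show "(\<Sum>k < length bs. card (bs ! k)) = n"
    using union by simp
qed

lemma ordered_set_partition_one_doubleton:
  assumes "ordered_set_partition n bs" and "n = Suc (length bs)"
  obtains i where "i < length bs" "card (bs ! i) = 2"
    "\<And>j. j < length bs \<Longrightarrow> j \<noteq> i \<Longrightarrow> card (bs ! j) = 1"
  using sum_eq_Suc_card_obtain_two[of "{..<length bs}" "\<lambda>k. card (bs ! k)"]
    ordered_set_partition_card_sum[OF assms(1)] assms(2)
  by (auto simp: Suc_le_eq card_gt_0_iff)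

lemma ordered_set_partition_disjoint_blocks:
  "ordered_set_partition n bs \<Longrightarrow> j < length bs \<Longrightarrow> k < length bs \<Longrightarrow> j \<noteq> k \<Longrightarrow>
    bs ! j \<inter> bs ! k = {}"
  unfolding ordered_set_partition_def by blast

lemma nth_update_window:
  "Suc i < length bs \<Longrightarrow>
    bs[i := X, Suc i := Y] ! k = (if k = Suc i then Y else if k = i then X else bs ! k)"
  by auto

definition has_12_above :: "nat set \<Rightarrow> nat set \<Rightarrow> nat \<Rightarrow> bool" where
  "has_12_above X Y w \<longleftrightarrow> (\<exists>p\<in>X. \<exists>q\<in>Y. w < p \<and> p < q)"

definition has_12_below :: "nat set \<Rightarrow> nat set \<Rightarrow> nat \<Rightarrow> bool" where
  "has_12_below X Y w \<longleftrightarrow> (\<exists>p\<in>X. \<exists>q\<in>Y. p < q \<and> q < w)"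

lemma contains_123_update_window:
  assumes window: "Suc i < length bs"
    and covers: "bs ! i \<union> bs ! Suc i \<subseteq> X \<union> Y"
    and above: "\<And>w. has_12_above (bs ! i) (bs ! Suc i) w \<Longrightarrow> has_12_above X Y w"
    and below: "\<And>w. has_12_below (bs ! i) (bs ! Suc i) w \<Longrightarrow> has_12_below X Y w"
    and "contains_123 bs"
  shows "contains_123 (bs[i := X, Suc i := Y])" (is "contains_123 ?bs'")
proof -
  obtain i1 i2 i3 x y z where pattern: "i1 < i2" "i2 < i3" "i3 < length bs"
    "x \<in> bs ! i1" "y \<in> bs ! i2" "z \<in> bs ! i3" "x < y" "y < z"
    using \<open>contains_123 bs\<close> unfolding contains_123_def by blast
  note nth' = nth_update_window[OF window]
  consider "i1 = i" "i2 = Suc i" | "i2 = i" "i3 = Suc i"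
    | "\<not> (i1 = i \<and> i2 = Suc i)" "\<not> (i2 = i \<and> i3 = Suc i)"
    by blast
  then show ?thesis
  proof cases
    case 1
    then obtain p q where "p \<in> X" "q \<in> Y" "p < q" "q < z"
      using below[of z] pattern unfolding has_12_below_def by blast
    then have "p \<in> ?bs' ! i" "q \<in> ?bs' ! Suc i" "z \<in> ?bs' ! i3"
      using 1 pattern nth' by auto
    then show ?thesis
      unfolding contains_123_def using 1 pattern \<open>p < q\<close> \<open>q < z\<close> by (metis length_list_update)
  next
    case 2
    then obtain p q where "p \<in> X" "q \<in> Y" "x < p" "p < q"
      using above[of x] pattern unfolding has_12_above_def by blast
    then have "x \<in> ?bs' ! i1" "p \<in> ?bs' ! i" "q \<in> ?bs' ! Suc i"
      using 2 pattern nth' by auto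
    then show ?thesis
      unfolding contains_123_def using 2 pattern window \<open>x < p\<close> \<open>p < q\<close>
      by (metis length_list_update)
  next
    case 3
    have relocate: "\<exists>k'. v \<in> ?bs' ! k' \<and> (k < i \<or> Suc i < k \<longrightarrow> k' = k) \<and>
        (i \<le> k \<and> k \<le> Suc i \<longrightarrow> i \<le> k' \<and> k' \<le> Suc i)"
      if "v \<in> bs ! k" for v k
    proof (cases "i \<le> k \<and> k \<le> Suc i")
      case True
      then have "v \<in> ?bs' ! i \<or> v \<in> ?bs' ! Suc i"
        using that covers nth' le_Suc_eq by auto
      then show ?thesis
        using True by (auto intro: exI[of _ i] exI[of _ "Suc i"])
    qed (use that nth' in \<open>auto intro: exI[of _ k]\<close>)
    obtain k1 k2 k3 where relocated:
      "x \<in> ?bs' ! k1" "i1 < i \<or> Suc i < i1 \<longrightarrow> k1 = i1"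
      "i \<le> i1 \<and> i1 \<le> Suc i \<longrightarrow> i \<le> k1 \<and> k1 \<le> Suc i"
      "y \<in> ?bs' ! k2" "i2 < i \<or> Suc i < i2 \<longrightarrow> k2 = i2"
      "i \<le> i2 \<and> i2 \<le> Suc i \<longrightarrow> i \<le> k2 \<and> k2 \<le> Suc i"
      "z \<in> ?bs' ! k3" "i3 < i \<or> Suc i < i3 \<longrightarrow> k3 = i3"
      "i \<le> i3 \<and> i3 \<le> Suc i \<longrightarrow> i \<le> k3 \<and> k3 \<le> Suc i"
      using relocate[OF pattern(4)] relocate[OF pattern(5)] relocate[OF pattern(6)] by blast
    have order: "k < k'" if "j < j'" "\<not> (j = i \<and> j' = Suc i)"
      "j < i \<or> Suc i < j \<longrightarrow> k = j" "i \<le> j \<and> j \<le> Suc i \<longrightarrow> i \<le> k \<and> k \<le> Suc i"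
      "j' < i \<or> Suc i < j' \<longrightarrow> k' = j'" "i \<le> j' \<and> j' \<le> Suc i \<longrightarrow> i \<le> k' \<and> k' \<le> Suc i"
      for j j' k k' :: nat
      using that by arith
    have "k1 < k2" "k2 < k3"
      using order[of i1 i2 k1 k2] order[of i2 i3 k2 k3] 3 pattern(1,2) relocated by blast+
    moreover have "k3 < length ?bs'"
      using pattern(3) window relocated(8,9) by (simp only: length_list_update) arith
    ultimately show ?thesis
      unfolding contains_123_def using pattern(7,8) relocated(1,4,7) by blast
  qed
qed

lemma ordered_set_partition_update_window:
  assumes partition: "ordered_set_partition n bs" and window: "Suc i < length bs"
    and "X \<noteq> {}" "Y \<noteq> {}" "X \<inter> Y = {}" and same_union: "X \<union> Y = bs ! i \<union> bs ! Suc i"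
  shows "ordered_set_partition n (bs[i := X, Suc i := Y])" (is "ordered_set_partition n ?bs'")
proof -
  note nth' = nth_update_window[OF window]
  have nonempty: "\<forall>k < length bs. bs ! k \<noteq> {}" and union: "\<Union> (set bs) = {1..n}"
    using partition unfolding ordered_set_partition_def by auto
  note disjoint = ordered_set_partition_disjoint_blocks[OF partition]
  have outside: "bs ! k \<inter> (X \<union> Y) = {}" if "k < length bs" "k \<noteq> i" "k \<noteq> Suc i" for k
  proof -
    have "bs ! k \<inter> bs ! i = {}" "bs ! k \<inter> bs ! Suc i = {}"
      using disjoint that window by auto
    then show ?thesis
      by (simp add: same_union Int_Un_distrib)
  qed
  have "\<forall>j < length ?bs'. \<forall>k < length ?bs'. j \<noteq> k \<longrightarrow> ?bs' ! j \<inter> ?bs' ! k = {}"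
    using disjoint outside \<open>X \<inter> Y = {}\<close> by (auto simp: nth' Int_commute)
  moreover have "\<Union> (set ?bs') = \<Union> (set bs)"
  proof -
    have split: "(\<Union>k < length cs. cs ! k) =
        cs ! i \<union> cs ! Suc i \<union> (\<Union>k \<in> {..<length cs} - {i, Suc i}. cs ! k)"
      if "length cs = length bs" for cs :: "nat set list"
    proof -
      have "{..<length cs} = insert i (insert (Suc i) ({..<length cs} - {i, Suc i}))"
        using that window by auto
      then show ?thesis
        by (metis UN_insert sup_assoc)
    qed
    show ?thesis
      unfolding Union_set_conv_nth split[of ?bs', simplified] split[of bs, OF refl]
      using window same_union by (auto simp: nth')
  qed
  ultimately show ?thesis
    using nonempty union \<open>X \<noteq> {}\<close> \<open>Y \<noteq> {}\<close> unfolding ordered_set_partition_def by (auto simp: nth')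
qed

lemma list_update_window_restore:
  "Suc i < length bs \<Longrightarrow> (bs[i := X, Suc i := Y])[i := bs ! i, Suc i := bs ! Suc i] = bs"
  by (simp add: list_eq_iff_nth_eq nth_list_update)

definition interchangeable :: "nat set \<Rightarrow> nat set \<Rightarrow> nat set \<Rightarrow> nat set \<Rightarrow> bool" where
  "interchangeable A B X Y \<longleftrightarrow> X \<noteq> {} \<and> Y \<noteq> {} \<and> X \<inter> Y = {} \<and> X \<union> Y = A \<union> B \<and>
     has_12_above X Y = has_12_above A B \<and> has_12_below X Y = has_12_below A B"

lemma update_window_interchangeable:
  assumes partition: "ordered_set_partition n bs" and window: "Suc i < length bs"
    and "interchangeable (bs ! i) (bs ! Suc i) X Y"
  shows "ordered_set_partition n (bs[i := X, Suc i := Y])"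
    and "contains_123 (bs[i := X, Suc i := Y]) \<longleftrightarrow> contains_123 bs"
proof -
  note inter = \<open>interchangeable (bs ! i) (bs ! Suc i) X Y\<close>[unfolded interchangeable_def]
  show "ordered_set_partition n (bs[i := X, Suc i := Y])"
    using ordered_set_partition_update_window[OF partition window] inter by blast
  show "contains_123 (bs[i := X, Suc i := Y]) \<longleftrightarrow> contains_123 bs"
  proof
    assume contains': "contains_123 (bs[i := X, Suc i := Y])"
    have "contains_123 ((bs[i := X, Suc i := Y])[i := bs ! i, Suc i := bs ! Suc i])"
      by (rule contains_123_update_window) (use window inter contains' in simp_all)
    then show "contains_123 bs"
      by (simp only: list_update_window_restore[OF window])
  next
    assume "contains_123 bs"
    then show "contains_123 (bs[i := X, Suc i := Y])"
      using window inter by (intro contains_123_update_window) auto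
  qed
qed

text \<open>Writing a < b for the doubleton and c for the singleton, move_right keeps the largest first
  entry and the smallest second entry of the 12 patterns across the two blocks; move_left undoes it.\<close>

definition move_right :: "nat set \<Rightarrow> nat set \<Rightarrow> nat set \<times> nat set" where
  "move_right A B = (let a = Min A; b = Max A; c = the_elem B in
     if a < c \<and> c < b then ({a}, {b, c}) else ({b}, {a, c}))"

definition move_left :: "nat set \<Rightarrow> nat set \<Rightarrow> nat set \<times> nat set" where
  "move_left A B = (let x = the_elem A; y = Min B; z = Max B in
     if y < x \<and> x < z then ({x, y}, {z}) else ({x, z}, {y}))"

lemma move_right_doubleton:
  fixes a b c :: nat
  assumes "a < b" "c \<noteq> a" "c \<noteq> b"
  defines "M \<equiv> move_right {a, b} {c}"
  shows "interchangeable {a, b} {c} (fst M) (snd M)" and "card (snd M) = 2"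
    and "move_left (fst M) (snd M) = ({a, b}, {c})"
proof -
  consider "c < a" | "a < c" "c < b" | "b < c"
    using assms by linarith
  then have "interchangeable {a, b} {c} (fst M) (snd M) \<and> card (snd M) = 2 \<and>
      move_left (fst M) (snd M) = ({a, b}, {c})"
    by cases (use assms in \<open>auto simp: M_def move_right_def move_left_def interchangeable_def
        has_12_above_def has_12_below_def fun_eq_iff insert_commute\<close>)
  then show "interchangeable {a, b} {c} (fst M) (snd M)" "card (snd M) = 2"
    "move_left (fst M) (snd M) = ({a, b}, {c})"
    by auto
qed

lemma move_left_doubleton:
  fixes x y z :: nat
  assumes "y < z" "x \<noteq> y" "x \<noteq> z"
  defines "M \<equiv> move_left {x} {y, z}"
  shows "interchangeable {x} {y, z} (fst M) (snd M)" and "card (fst M) = 2"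
    and "move_right (fst M) (snd M) = ({x}, {y, z})"
proof -
  consider "x < y" | "y < x" "x < z" | "z < x"
    using assms by linarith
  then have "interchangeable {x} {y, z} (fst M) (snd M) \<and> card (fst M) = 2 \<and>
      move_right (fst M) (snd M) = ({x}, {y, z})"
    by cases (use assms in \<open>auto simp: M_def move_right_def move_left_def interchangeable_def
        has_12_above_def has_12_below_def fun_eq_iff insert_commute\<close>)
  then show "interchangeable {x} {y, z} (fst M) (snd M)" "card (fst M) = 2"
    "move_right (fst M) (snd M) = ({x}, {y, z})"
    by auto
qed

definition shift_right :: "nat \<Rightarrow> nat set list \<Rightarrow> nat set list" where
  "shift_right i bs = (let M = move_right (bs ! i) (bs ! Suc i) in bs[i := fst M, Suc i := snd M])"

definition shift_left :: "nat \<Rightarrow> nat set list \<Rightarrow> nat set list" where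
  "shift_left i bs = (let M = move_left (bs ! i) (bs ! Suc i) in bs[i := fst M, Suc i := snd M])"

definition avoiders_doubleton_at :: "nat \<Rightarrow> nat \<Rightarrow> nat set list set" where
  "avoiders_doubleton_at n i =
     {bs. ordered_set_partition n bs \<and> length bs = n - 1 \<and> card (bs ! i) = 2 \<and> \<not> contains_123 bs}"

lemma avoiders_doubleton_at_singleton:
  assumes "bs \<in> avoiders_doubleton_at n i" and "i < n - 1" and "j < n - 1" and "j \<noteq> i"
  shows "card (bs ! j) = 1"
proof -
  have bs: "ordered_set_partition n bs" "length bs = n - 1" "card (bs ! i) = 2"
    using assms(1) unfolding avoiders_doubleton_at_def by auto
  moreover have "n = Suc (length bs)"
    using bs(2) assms(2) by simp
  ultimately obtain d where "d < length bs" "card (bs ! d) = 2"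
    and others: "\<And>j. j < length bs \<Longrightarrow> j \<noteq> d \<Longrightarrow> card (bs ! j) = 1"
    using ordered_set_partition_one_doubleton by blast
  moreover have "i = d"
    using others[of i] bs assms(2) by fastforce
  ultimately show ?thesis
    using assms(3,4) bs(2) by simp
qed

lemma shift_right_avoiders:
  assumes "Suc i < n - 1" and bs: "bs \<in> avoiders_doubleton_at n i"
  shows "shift_right i bs \<in> avoiders_doubleton_at n (Suc i)" and "shift_left i (shift_right i bs) = bs"
proof -
  have partition: "ordered_set_partition n bs" and len: "length bs = n - 1" and "card (bs ! i) = 2"
    and avoids: "\<not> contains_123 bs"
    using bs unfolding avoiders_doubleton_at_def by auto
  then obtain a b where ab: "a < b" "bs ! i = {a, b}"
    by (auto elim: card_2_obtain_less)
  obtain c where c: "bs ! Suc i = {c}"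
    using avoiders_doubleton_at_singleton[OF bs _ \<open>Suc i < n - 1\<close>] \<open>Suc i < n - 1\<close>
    by (metis Suc_lessD card_1_singletonE n_not_Suc_n)
  have window: "Suc i < length bs"
    using \<open>Suc i < n - 1\<close> len by simp
  have "c \<noteq> a" "c \<noteq> b"
    using ordered_set_partition_disjoint_blocks[OF partition _ window, of i] window ab c by auto
  note move = move_right_doubleton[OF \<open>a < b\<close> this, folded ab(2) c]
  show "shift_right i bs \<in> avoiders_doubleton_at n (Suc i)"
    using update_window_interchangeable[OF partition window move(1)] move(2) window len avoids
    unfolding shift_right_def avoiders_doubleton_at_def by (simp add: Let_def)
  show "shift_left i (shift_right i bs) = bs"
    using move(3) window by (simp add: shift_right_def shift_left_def list_update_window_restore Let_def)
qed

lemma shift_left_avoiders: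
  assumes "Suc i < n - 1" and bs: "bs \<in> avoiders_doubleton_at n (Suc i)"
  shows "shift_left i bs \<in> avoiders_doubleton_at n i" and "shift_right i (shift_left i bs) = bs"
proof -
  have partition: "ordered_set_partition n bs" and len: "length bs = n - 1" and "card (bs ! Suc i) = 2"
    and avoids: "\<not> contains_123 bs"
    using bs unfolding avoiders_doubleton_at_def by auto
  then obtain y z where yz: "y < z" "bs ! Suc i = {y, z}"
    by (auto elim: card_2_obtain_less)
  obtain x where x: "bs ! i = {x}"
    using avoiders_doubleton_at_singleton[OF bs \<open>Suc i < n - 1\<close>, of i] \<open>Suc i < n - 1\<close>
    by (metis Suc_lessD card_1_singletonE n_not_Suc_n)
  have window: "Suc i < length bs"
    using \<open>Suc i < n - 1\<close> len by simp
  have "x \<noteq> y" "x \<noteq> z"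
    using ordered_set_partition_disjoint_blocks[OF partition _ window, of i] window x yz by auto
  note move = move_left_doubleton[OF \<open>y < z\<close> this, folded x yz(2)]
  show "shift_left i bs \<in> avoiders_doubleton_at n i"
    using update_window_interchangeable[OF partition window move(1)] move(2) window len avoids
    unfolding shift_left_def avoiders_doubleton_at_def by (simp add: Let_def)
  show "shift_right i (shift_left i bs) = bs"
    using move(3) window by (simp add: shift_right_def shift_left_def list_update_window_restore Let_def)
qed

lemma card_avoiders_doubleton_at:
  assumes "i < n - 1"
  shows "card (avoiders_doubleton_at n i) = card (avoiders_doubleton_at n 0)"
  using assms
proof (induction i)
  case (Suc i)
  have "bij_betw (shift_right i) (avoiders_doubleton_at n i) (avoiders_doubleton_at n (Suc i))"
    using shift_right_avoiders[OF Suc.prems] shift_left_avoiders[OF Suc.prems]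
    by (intro bij_betw_byWitness[where f' = "shift_left i"]) auto
  then show ?case
    using Suc by (simp add: bij_betw_same_card)
qed simp

lemma finite_ordered_set_partitions: "finite {bs. ordered_set_partition n bs \<and> length bs = m}"
proof (rule finite_subset)
  show "{bs. ordered_set_partition n bs \<and> length bs = m} \<subseteq> {bs. set bs \<subseteq> Pow {1..n} \<and> length bs = m}"
    unfolding ordered_set_partition_def by blast
qed (simp add: finite_lists_length_eq)

lemma avoiders_eq_UN_avoiders_doubleton_at:
  assumes "n > 0"
  shows "{bs. ordered_set_partition n bs \<and> length bs = n - 1 \<and> \<not> contains_123 bs} =
    (\<Union>i < n - 1. avoiders_doubleton_at n i)"
proof
  show "{bs. ordered_set_partition n bs \<and> length bs = n - 1 \<and> \<not> contains_123 bs} \<subseteq>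
      (\<Union>i < n - 1. avoiders_doubleton_at n i)"
  proof
    fix bs assume "bs \<in> {bs. ordered_set_partition n bs \<and> length bs = n - 1 \<and> \<not> contains_123 bs}"
    then have bs: "ordered_set_partition n bs" "length bs = n - 1" "\<not> contains_123 bs"
      by simp_all
    moreover have "n = Suc (length bs)"
      using bs(2) assms by simp
    ultimately obtain i where "i < length bs" "card (bs ! i) = 2"
      using ordered_set_partition_one_doubleton by metis
    with bs show "bs \<in> (\<Union>i < n - 1. avoiders_doubleton_at n i)"
      unfolding avoiders_doubleton_at_def by auto
  qed
qed (auto simp: avoiders_doubleton_at_def)

lemma card_UN_avoiders_doubleton_at:
  "card (\<Union>i < n - 1. avoiders_doubleton_at n i) = (n - 1) * card (avoiders_doubleton_at n 0)"
proof -
  have "finite (avoiders_doubleton_at n i)" for i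
    by (rule finite_subset[OF _ finite_ordered_set_partitions[of n "n - 1"]])
      (auto simp: avoiders_doubleton_at_def)
  moreover have "avoiders_doubleton_at n i \<inter> avoiders_doubleton_at n j = {}"
    if "i < n - 1" "j < n - 1" "i \<noteq> j" for i j
    using avoiders_doubleton_at_singleton[of _ n i j] that by (auto simp: avoiders_doubleton_at_def)
  ultimately have "card (\<Union>i < n - 1. avoiders_doubleton_at n i) =
      (\<Sum>i < n - 1. card (avoiders_doubleton_at n i))"
    by (intro card_UN_disjoint) auto
  also have "\<dots> = (\<Sum>i < n - 1. card (avoiders_doubleton_at n 0))"
    by (intro sum.cong refl card_avoiders_doubleton_at) simp
  finally show ?thesis
    by simp
qed

lemma avoiders_with_sizes_eq_avoiders_doubleton_at_0:
  assumes "n \<ge> 2"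
  shows "{bs. ordered_set_partition n bs \<and> length bs = n - 1 \<and>
      (\<forall>i < n - 1. card (bs ! i) = (2 # replicate (n - 2) 1) ! i) \<and> \<not> contains_123 bs} =
    avoiders_doubleton_at n 0" (is "?S = _")
proof
  show "?S \<subseteq> avoiders_doubleton_at n 0"
    using assms by (auto simp: avoiders_doubleton_at_def)
  show "avoiders_doubleton_at n 0 \<subseteq> ?S"
  proof
    fix bs assume bs: "bs \<in> avoiders_doubleton_at n 0"
    have "card (bs ! i) = (2 # replicate (n - 2) 1) ! i" if "i < n - 1" for i
      using avoiders_doubleton_at_singleton[OF bs _ that] bs that assms
      by (cases i) (auto simp: avoiders_doubleton_at_def)
    then show "bs \<in> ?S"
      using bs by (auto simp: avoiders_doubleton_at_def)
  qed
qed

theorem corollary1: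
  fixes n :: nat
  assumes "n \<ge> 2"
  shows "op_nk n (n - 1) [1, 2, 3] = (n - 1) * op_sizes (2 # replicate (n - 2) 1) [1, 2, 3]"
proof -
  have sizes: "sum_list (2 # replicate (n - 2) 1) = n" "length (2 # replicate (n - 2) (1::nat)) = n - 1"
    using assms by (simp_all add: sum_list_replicate)
  have "n > 0"
    using assms by simp
  have "op_nk n (n - 1) [1, 2, 3] = card (\<Union>i < n - 1. avoiders_doubleton_at n i)"
    unfolding op_nk_def op_avoids_123_iff avoiders_eq_UN_avoiders_doubleton_at[OF \<open>n > 0\<close>] ..
  also have "\<dots> = (n - 1) * card (avoiders_doubleton_at n 0)"
    by (rule card_UN_avoiders_doubleton_at)
  also have "card (avoiders_doubleton_at n 0) = op_sizes (2 # replicate (n - 2) 1) [1, 2, 3]"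
    unfolding op_sizes_def op_avoids_123_iff sizes avoiders_with_sizes_eq_avoiders_doubleton_at_0[OF assms] ..
  finally show ?thesis .
qed

end
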